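(* Let $F$ be the elementary cellular automaton with rule number 27. For every nonempty finite word $u\in\{0,1\}^*$, the deterministic communication complexity of $\textsc{SInv}_{F,u}$ restricted to inputs of length $n$ is bounded by a constant independent of $n$.
   Context: An elementary cellular automaton (ECA) with rule number $N\in\{0,\dots,255\}$ is the map $F:\{0,1\}^{\mathbb Z}\to\{0,1\}^{\mathbb Z}$ given by $F(x)_i=f(x_{i-1},x_i,x_{i+1})$. Here the local rule $f:\{0,1\}^3\to\{0,1\}$ is determined by $N=\sum_{a,b,c\in\{0,1\}}2^{4a+2b+c}f(a,b,c)$. For a nonempty finite word $u$, $p_u\in\{0,1\}^{\mathbb Z}$ is defined by $(p_u)_i=u_{i\bmod |u|}$. For a finite word $x$, $p_u[x]$ is the configuration equal to $x$ on positions $0,\dots,|x|-1$ and to $p_u$ elsewhere. $\textsc{SInv}_{F,u}$ is the decision problem: on input a finite word $x$, decide whether there is an integer $w$ such that for all $t\ge0$ the set of positions where $F^t(p_u)$ and $F^t(p_u[x])$ differ is contained in an interval of length $w$. For each $n$, it is regarded as a function $\{0,1\}^n\to\{0,1\}$. For a function $g:X\times Y\to Z$, $D(g)$ is the minimal depth of a deterministic two-party protocol computing $g$. In such a protocol, Alice knows $x$ and Bob knows $y$. The protocol is a binary tree: each internal node is labelled by a function of Alice's input only or of Bob's input only, with values in $\{\text{left},\text{right}\}$, and each leaf is labelled by an output value. For $g:\{0,1\}^m\to Z$, set $D(g)=\max_{0\le i<m}D(g_i)$, where $g_i:\{0,1\}^i\times\{0,1\}^{m-i}\to Z$ is $g_i(x,y)=g(xy)$.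 *)

theory Defs
  imports Main
begin

type_synonym config = "int \<Rightarrow> bool"

definition eca_local :: "nat \<Rightarrow> bool \<Rightarrow> bool \<Rightarrow> bool \<Rightarrow> bool" where
  "eca_local N a b c = bit N (4 * of_bool a + 2 * of_bool b + of_bool c)"

definition eca :: "nat \<Rightarrow> config \<Rightarrow> config" where
  "eca N x = (\<lambda>i. eca_local N (x (i - 1)) (x i) (x (i + 1)))"

definition pconf :: "bool list \<Rightarrow> config" where
  "pconf u = (\<lambda>i. u ! nat (i mod int (length u)))"

definition patch :: "bool list \<Rightarrow> bool list \<Rightarrow> config" where
  "patch u x = (\<lambda>i. if 0 \<le> i \<and> i < int (length x) then x ! nat i else pconf u i)"

definition SInv :: "nat \<Rightarrow> bool list \<Rightarrow> bool list \<Rightarrow> bool" where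
  "SInv N u x = (\<exists>w::int. \<forall>t::nat. \<exists>a::int.
      {i. (eca N ^^ t) (pconf u) i \<noteq> (eca N ^^ t) (patch u x) i} \<subseteq> {a..<a + w})"

datatype protocol =
    Leaf bool
  | Alice "bool list \<Rightarrow> bool" protocol protocol
  | Bob "bool list \<Rightarrow> bool" protocol protocol

fun run :: "protocol \<Rightarrow> bool list \<Rightarrow> bool list \<Rightarrow> bool" where
  "run (Leaf z) x y = z"
| "run (Alice f l r) x y = (if f x then run r x y else run l x y)"
| "run (Bob f l r) x y = (if f y then run r x y else run l x y)"

fun depth :: "protocol \<Rightarrow> nat" where
  "depth (Leaf z) = 0"
| "depth (Alice f l r) = Suc (max (depth l) (depth r))"
| "depth (Bob f l r) = Suc (max (depth l) (depth r))"

definition computes :: "protocol \<Rightarrow> (bool list \<Rightarrow> bool) \<Rightarrow> nat \<Rightarrow> nat \<Rightarrow> bool" where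
  "computes P g m i = (\<forall>x y. length x = i \<longrightarrow> length y = m - i \<longrightarrow> run P x y = g (x @ y))"

definition Dcut :: "(bool list \<Rightarrow> bool) \<Rightarrow> nat \<Rightarrow> nat \<Rightarrow> nat" where
  "Dcut g m i = (LEAST d. \<exists>P. computes P g m i \<and> depth P = d)"

definition D :: "(bool list \<Rightarrow> bool) \<Rightarrow> nat \<Rightarrow> nat" where
  "D g m = (if m = 0 then 0 else Max (Dcut g m ` {..<m}))"

end

theory Submission
  imports Defs
begin

(*
  The proof rests on an explicit description of the dynamics of rule 27.
  Two steps of F form a radius-2 rule which, applied to a configuration
  avoiding the pattern 1010, acts very simply: a site j is *active* when
  (c(j-1), c(j+1), c(j+2)) = (0,1,0); every active site copies the value of
  site j+3, all other sites keep their value, and the set of active sites is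
  invariant. Since F^2 never produces 1010, from time 2 on the evolution is
  this "shift along active chains" (up to a spatial translation).

  For a spatially periodic background p_u and a finite perturbation x this
  yields an exact criterion: SInv(x) fails iff the background contains a
  whole residue class mod 3 of active sites, and the perturbed configuration
  carries a "defect" on that class left of its first blocked (inactive) class
  site: the defect then travels left forever while the blocked site stays put.
  Both ingredients split across any cut
  x = x1 x2 into a bounded amount of information about x1 (three bits and the
  last eight letters), so Alice can send this summary and Bob can answer.
*)

section \<open>Rule 27 as a shift along active chains\<close>

lemma eca27_local: "eca_local 27 a b c = (if c then \<not> a else \<not> b)"
  by (cases a; cases b; cases c) (simp_all add: eca_local_def bit_nat_def)

lemma eca27: "eca 27 c i = (if c (i + 1) then \<not> c (i - 1) else \<not> c i)"
  by (simp add: eca_def eca27_local)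

text \<open>Two steps of rule 27, as a radius-2 rule read on the window j-1..j+3.\<close>

definition double_local :: "bool \<Rightarrow> bool \<Rightarrow> bool \<Rightarrow> bool \<Rightarrow> bool \<Rightarrow> bool" where
  "double_local a b c d e = (if \<not> b \<and> c \<and> \<not> d \<and> (a \<or> e) then True
      else if \<not> a \<and> b \<and> c \<and> \<not> d \<and> \<not> e then False else b)"

definition double_step :: "config \<Rightarrow> config" where
  "double_step c = (\<lambda>j. double_local (c (j - 1)) (c j) (c (j + 1)) (c (j + 2)) (c (j + 3)))"

lemma eca27_twice: "eca 27 (eca 27 c) i = double_step c (i - 1)"
proof -
  have "eca 27 (eca 27 c) i =
    (if (if c (i+2) then \<not> c i else \<not> c (i+1)) then \<not> (if c i then \<not> c (i-2) else \<not> c (i-1))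
     else \<not> (if c (i+1) then \<not> c (i-1) else \<not> c i))"
    by (simp add: eca27 algebra_simps)
  also have "\<dots> = double_step c (i - 1)"
    by (simp add: double_step_def double_local_def algebra_simps)
       (cases "c (i-2)"; cases "c (i-1)"; cases "c i"; cases "c (i+1)"; cases "c (i+2)"; simp)
  finally show ?thesis .
qed

definition active :: "config \<Rightarrow> int \<Rightarrow> bool" where
  "active c j = (\<not> c (j - 1) \<and> c (j + 1) \<and> \<not> c (j + 2))"

definition shift_step :: "config \<Rightarrow> config" where
  "shift_step c = (\<lambda>j. if active c j then c (j + 3) else c j)"

definition no_1010 :: "config \<Rightarrow> bool" where
  "no_1010 c = (\<forall>j. \<not> (c j \<and> \<not> c (j + 1) \<and> c (j + 2) \<and> \<not> c (j + 3)))"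

lemma active_neighbours:
  assumes "active c j"
  shows "\<not> active c (j + 1)" "\<not> active c (j + 2)" "c (j + 1)" "\<not> c (j - 1)"
  using assms by (simp_all add: active_def algebra_simps)

lemma no_1010_double_step: "no_1010 (double_step c)"
  unfolding no_1010_def
proof
  fix j
  have e: "double_step c j = double_local (c (j-1)) (c j) (c (j+1)) (c (j+2)) (c (j+3))"
    "double_step c (j+1) = double_local (c j) (c (j+1)) (c (j+2)) (c (j+3)) (c (j+4))"
    "double_step c (j+2) = double_local (c (j+1)) (c (j+2)) (c (j+3)) (c (j+4)) (c (j+5))"
    "double_step c (j+3) = double_local (c (j+2)) (c (j+3)) (c (j+4)) (c (j+5)) (c (j+6))"
    by (simp_all add: double_step_def algebra_simps)
  show "\<not> (double_step c j \<and> \<not> double_step c (j+1) \<and> double_step c (j+2) \<and> \<not> double_step c (j+3))"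
    unfolding e double_local_def
    by (cases "c (j-1)"; cases "c j"; cases "c (j+1)"; cases "c (j+2)"; cases "c (j+3)";
        cases "c (j+4)"; cases "c (j+5)"; cases "c (j+6)"; simp)
qed

lemma double_step_eq_shift_step:
  assumes "no_1010 c"
  shows "double_step c = shift_step c"
proof
  fix j
  have "\<not> (c (j-1) \<and> \<not> c j \<and> c (j+1) \<and> \<not> c (j+2))"
    using assms[unfolded no_1010_def, rule_format, of "j-1"] by (simp add: algebra_simps)
  moreover have "\<not> (c j \<and> \<not> c (j+1) \<and> c (j+2) \<and> \<not> c (j+3))"
    using assms[unfolded no_1010_def, rule_format, of j] by simp
  ultimately show "double_step c j = shift_step c j"
    unfolding double_step_def shift_step_def active_def double_local_def
    by (cases "c (j-1)"; cases "c j"; cases "c (j+1)"; cases "c (j+2)"; cases "c (j+3)"; simp)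
qed

lemma active_shift_step: "active (shift_step c) j = active c j"
proof -
  have e: "shift_step c (j-1) = (if \<not> c (j-2) \<and> c j \<and> \<not> c (j+1) then c (j+2) else c (j-1))"
    "shift_step c (j+1) = (if \<not> c j \<and> c (j+2) \<and> \<not> c (j+3) then c (j+4) else c (j+1))"
    "shift_step c (j+2) = (if \<not> c (j+1) \<and> c (j+3) \<and> \<not> c (j+4) then c (j+5) else c (j+2))"
    by (simp_all add: shift_step_def active_def algebra_simps)
  show ?thesis unfolding active_def e
    by (cases "c (j-2)"; cases "c (j-1)"; cases "c j"; cases "c (j+1)"; cases "c (j+2)";
        cases "c (j+3)"; cases "c (j+4)"; cases "c (j+5)"; simp)
qed

definition shift_iter :: "config \<Rightarrow> nat \<Rightarrow> config" where
  "shift_iter c t = (shift_step ^^ t) c"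

lemma shift_iter_0 [simp]: "shift_iter c 0 = c"
  by (simp add: shift_iter_def)

lemma active_shift_iter [simp]: "active (shift_iter c t) = active c"
  by (induction t) (auto simp: shift_iter_def active_shift_step fun_eq_iff)

lemma shift_iter_Suc:
  "shift_iter c (Suc t) j = (if active c j then shift_iter c t (j + 3) else shift_iter c t j)"
proof -
  have "shift_iter c (Suc t) = shift_step (shift_iter c t)"
    by (simp add: shift_iter_def)
  then show ?thesis by (simp add: shift_step_def)
qed

lemma shift_iter_inactive: "\<not> active c j \<Longrightarrow> shift_iter c t j = c j"
  by (induction t) (simp_all add: shift_iter_Suc)

lemma shift_iter_chain:
  "(\<forall>m<k. active c (p + 3 * int m)) \<Longrightarrow> shift_iter c (k + s) p = shift_iter c s (p + 3 * int k)"
proof (induction k arbitrary: p)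
  case (Suc k)
  have "\<forall>m<k. active c (p + 3 + 3 * int m)"
    using Suc.prems by (auto simp: algebra_simps)
  then have "shift_iter c (k + s) (p + 3) = shift_iter c s (p + 3 * int (Suc k))"
    using Suc.IH[of "p + 3"] by (simp add: algebra_simps)
  moreover have "active c p" using Suc.prems by force
  ultimately show ?case by (simp add: shift_iter_Suc)
qed simp

lemma shift_iter_run:
  "(\<forall>m<t. active c (p + 3 * int m)) \<Longrightarrow> shift_iter c t p = c (p + 3 * int t)"
  using shift_iter_chain[of t c p 0] by simp

lemma shift_iter_blocked:
  assumes "p \<le> b" "3 dvd (b - p)" "\<not> active c b"
    and chain: "\<And>q. p \<le> q \<Longrightarrow> q < b \<Longrightarrow> 3 dvd (q - p) \<Longrightarrow> active c q"
  shows "shift_iter c t p = c (min (p + 3 * int t) b)"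
proof -
  define k where "k = nat ((b - p) div 3)"
  have b: "b = p + 3 * int k" using assms(1,2) by (auto simp: k_def)
  have act: "\<forall>m<k. active c (p + 3 * int m)"
    by (auto intro!: chain simp: b)
  show ?thesis
  proof (cases "t \<le> k")
    case True
    then show ?thesis using shift_iter_run[of t c p] act b by auto
  next
    case False
    then have "shift_iter c t p = shift_iter c (t - k) b"
      using shift_iter_chain[OF act, of "t - k"] b by simp
    then show ?thesis using False b assms(3) by (simp add: shift_iter_inactive)
  qed
qed

lemma shift_iter_no_1010: "no_1010 (shift_iter (double_step c) t)"
proof (induction t)
  case (Suc t)
  have "shift_iter (double_step c) (Suc t) = shift_step (shift_iter (double_step c) t)"
    by (simp add: shift_iter_def)
  also have "\<dots> = double_step (shift_iter (double_step c) t)"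
    using double_step_eq_shift_step[OF Suc] by simp
  finally show ?case by (simp add: no_1010_double_step)
qed (simp add: no_1010_double_step)

lemma double_step_translate: "double_step (\<lambda>i. d (i - s)) j = double_step d (j - s)"
  by (simp add: double_step_def algebra_simps)

lemma eca27_iterate: "(eca 27 ^^ (2 * t + 2)) c i = shift_iter (double_step c) t (i - int t - 1)"
proof (induction t arbitrary: i)
  case 0
  then show ?case by (simp add: eca27_twice numeral_2_eq_2)
next
  case (Suc t)
  let ?e = "shift_iter (double_step c) t"
  have IH: "(eca 27 ^^ (2 * t + 2)) c = (\<lambda>i. ?e (i - (int t + 1)))"
    using Suc by (simp add: fun_eq_iff algebra_simps)
  have "(eca 27 ^^ (2 * Suc t + 2)) c i = double_step ((eca 27 ^^ (2 * t + 2)) c) (i - 1)"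
    by (simp add: eca27_twice)
  also have "\<dots> = double_step ?e (i - 1 - (int t + 1))"
    unfolding IH by (rule double_step_translate)
  also have "\<dots> = shift_step ?e (i - 1 - (int t + 1))"
    using double_step_eq_shift_step[OF shift_iter_no_1010] by simp
  also have "\<dots> = shift_iter (double_step c) (Suc t) (i - int (Suc t) - 1)"
    by (simp add: shift_iter_def algebra_simps)
  finally show ?case .
qed

section \<open>Reduction of SInv to the shift dynamics\<close>

definition width_bounded :: "(nat \<Rightarrow> int set) \<Rightarrow> bool" where
  "width_bounded S = (\<exists>w. \<forall>t. \<exists>a. S t \<subseteq> {a..<a + w})"

lemma width_bounded_I: "(\<And>t. S t \<subseteq> {f t..<f t + w}) \<Longrightarrow> width_bounded S"
  unfolding width_bounded_def by blast

lemma width_bounded_const: "(\<And>t. S t \<subseteq> {a..<b}) \<Longrightarrow> width_bounded S"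
  by (rule width_bounded_I[where f = "\<lambda>_. a" and w = "b - a"]) auto

lemma width_bounded_from_even:
  fixes S :: "nat \<Rightarrow> int set"
  assumes spread: "\<And>s i. i \<in> S (Suc s) \<Longrightarrow> i - 1 \<in> S s \<or> i \<in> S s \<or> i + 1 \<in> S s"
    and init: "S 0 \<subseteq> {a0..<a0 + v}"
    and even: "\<And>t. \<exists>a. S (2 * t + 2) \<subseteq> {a..<a + w}"
  shows "width_bounded S"
proof -
  let ?W = "max w v"
  have even_all: "\<exists>a. S (2 * t) \<subseteq> {a..<a + ?W}" for t
  proof (cases t)
    case 0
    have "S 0 \<subseteq> {a0..<a0 + ?W}" using init by force
    then show ?thesis using 0 by auto
  next
    case (Suc t')
    obtain a where "S (2 * t' + 2) \<subseteq> {a..<a + w}" using even by blast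
    then have "S (2 * t) \<subseteq> {a..<a + w}" using Suc by simp
    moreover have "{a..<a + w} \<subseteq> {a..<a + ?W}" by auto
    ultimately show ?thesis by blast
  qed
  have "\<exists>a. S s \<subseteq> {a..<a + (?W + 2)}" for s
  proof -
    have "\<exists>t. s = 2 * t \<or> s = Suc (2 * t)" by presburger
    then obtain t where s: "s = 2 * t \<or> s = Suc (2 * t)" by blast
    obtain a where a: "S (2 * t) \<subseteq> {a..<a + ?W}" using even_all by blast
    have "S (2 * t) \<subseteq> {a - 1..<a - 1 + (?W + 2)}" using a by force
    moreover have "S (Suc (2 * t)) \<subseteq> {a - 1..<a - 1 + (?W + 2)}"
    proof
      fix i assume "i \<in> S (Suc (2 * t))"
      then have "i - 1 \<in> S (2 * t) \<or> i \<in> S (2 * t) \<or> i + 1 \<in> S (2 * t)" by (rule spread)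
      then show "i \<in> {a - 1..<a - 1 + (?W + 2)}" using a by auto
    qed
    ultimately show ?thesis using s by blast
  qed
  then show ?thesis unfolding width_bounded_def by blast
qed

definition eca_diff :: "bool list \<Rightarrow> bool list \<Rightarrow> nat \<Rightarrow> int set" where
  "eca_diff u x s = {i. (eca 27 ^^ s) (pconf u) i \<noteq> (eca 27 ^^ s) (patch u x) i}"

definition background :: "bool list \<Rightarrow> config" where
  "background u = double_step (pconf u)"

definition perturbed :: "bool list \<Rightarrow> bool list \<Rightarrow> config" where
  "perturbed u x = double_step (patch u x)"

definition shift_diff :: "bool list \<Rightarrow> bool list \<Rightarrow> nat \<Rightarrow> int set" where
  "shift_diff u x t = {j. shift_iter (background u) t j \<noteq> shift_iter (perturbed u x) t j}"

lemma eca_diff_even: "eca_diff u x (2 * t + 2) = {i. i - int t - 1 \<in> shift_diff u x t}"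
  unfolding eca_diff_def shift_diff_def eca27_iterate background_def perturbed_def by simp

lemma eca_diff_spread:
  assumes "i \<in> eca_diff u x (Suc s)"
  shows "i - 1 \<in> eca_diff u x s \<or> i \<in> eca_diff u x s \<or> i + 1 \<in> eca_diff u x s"
proof (rule ccontr)
  assume "\<not> ?thesis"
  then have "(eca 27 ^^ s) (pconf u) k = (eca 27 ^^ s) (patch u x) k" if "k \<in> {i - 1, i, i + 1}" for k
    using that by (auto simp: eca_diff_def)
  then have "(eca 27 ^^ Suc s) (pconf u) i = (eca 27 ^^ Suc s) (patch u x) i"
    by (simp add: eca_def)
  then show False using assms by (simp add: eca_diff_def)
qed

lemma SInv_iff_shift_diff: "SInv 27 u x = width_bounded (shift_diff u x)"
proof
  assume "SInv 27 u x"
  then obtain w where w: "\<And>s. \<exists>a. eca_diff u x s \<subseteq> {a..<a + w}"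
    by (auto simp: SInv_def eca_diff_def)
  have "\<exists>a. shift_diff u x t \<subseteq> {a..<a + w}" for t
  proof -
    obtain a where "eca_diff u x (2 * t + 2) \<subseteq> {a..<a + w}" using w by blast
    moreover have "j + int t + 1 \<in> eca_diff u x (2 * t + 2)" if "j \<in> shift_diff u x t" for j
      unfolding eca_diff_even using that by simp
    ultimately have "shift_diff u x t \<subseteq> {a - int t - 1..<a - int t - 1 + w}" by force
    then show ?thesis by blast
  qed
  then show "width_bounded (shift_diff u x)" unfolding width_bounded_def by blast
next
  assume "width_bounded (shift_diff u x)"
  then obtain w where w: "\<And>t. \<exists>a. shift_diff u x t \<subseteq> {a..<a + w}"
    unfolding width_bounded_def by blast
  have "\<exists>a. eca_diff u x (2 * t + 2) \<subseteq> {a..<a + w}" for t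
  proof -
    obtain a where "shift_diff u x t \<subseteq> {a..<a + w}" using w by blast
    then have "eca_diff u x (2 * t + 2) \<subseteq> {a + int t + 1..<a + int t + 1 + w}"
      unfolding eca_diff_even by force
    then show ?thesis by blast
  qed
  moreover have "eca_diff u x 0 \<subseteq> {0..<0 + int (length x)}"
    by (auto simp: eca_diff_def patch_def)
  ultimately have "width_bounded (eca_diff u x)"
    by (intro width_bounded_from_even eca_diff_spread)
  then show "SInv 27 u x" by (simp add: SInv_def width_bounded_def eca_diff_def)
qed

section \<open>Locality and periodicity\<close>

lemma double_step_local:
  "(\<And>k. j - 1 \<le> k \<Longrightarrow> k \<le> j + 3 \<Longrightarrow> c k = d k) \<Longrightarrow> double_step c j = double_step d j"
  by (simp add: double_step_def)

lemma active_local: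
  "(\<And>k. j - 1 \<le> k \<Longrightarrow> k \<le> j + 2 \<Longrightarrow> c k = d k) \<Longrightarrow> active c j = active d j"
  by (simp add: active_def)

lemma active_translate: "active (\<lambda>i. c (i - s)) j = active c (j - s)"
  by (simp add: active_def algebra_simps)

lemma patch_outside: "j < 0 \<or> int (length x) \<le> j \<Longrightarrow> patch u x j = pconf u j"
  by (auto simp: patch_def)

lemma perturbed_outside: "j \<le> -4 \<or> int (length x) + 1 \<le> j \<Longrightarrow> perturbed u x j = background u j"
  unfolding perturbed_def background_def by (rule double_step_local) (auto intro!: patch_outside)

lemma active_perturbed_outside:
  "j \<le> -6 \<or> int (length x) + 2 \<le> j \<Longrightarrow> active (perturbed u x) j = active (background u) j"
  by (rule active_local) (auto intro!: perturbed_outside)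

lemma pconf_periodic: "u \<noteq> [] \<Longrightarrow> pconf u (j + int (length u) * m) = pconf u j"
  by (simp add: pconf_def)

lemma background_periodic: "u \<noteq> [] \<Longrightarrow> background u (j + int (length u) * m) = background u j"
  using double_step_translate[of "pconf u" "- int (length u) * m" j]
  by (simp add: background_def pconf_periodic)

lemma active_background_periodic:
  "u \<noteq> [] \<Longrightarrow> active (background u) (j + int (length u) * m) = active (background u) j"
  using active_translate[of "background u" "- int (length u) * m" j]
  by (simp add: background_periodic)

section \<open>The criterion for SInv\<close>

text \<open>The background contains a full residue class mod 3 of active sites; since active sites
  are at distance at least 3, such a class is then exactly the set of active sites.\<close>

definition full_class :: "bool list \<Rightarrow> bool" where
  "full_class u = (\<exists>r. \<forall>k::int. active (background u) (r + 3 * k))"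

definition class_rep :: "bool list \<Rightarrow> int" where
  "class_rep u = (SOME r. \<forall>k::int. active (background u) (r + 3 * k))"

definition in_class :: "bool list \<Rightarrow> int \<Rightarrow> bool" where
  "in_class u q = (3 dvd (q - class_rep u))"

definition defect :: "bool list \<Rightarrow> bool list \<Rightarrow> int \<Rightarrow> bool" where
  "defect u x i = (\<exists>j. in_class u j \<and> perturbed u x i \<noteq> background u j)"

definition blocked_defect :: "bool list \<Rightarrow> bool list \<Rightarrow> bool" where
  "blocked_defect u x = (\<exists>i b. in_class u i \<and> in_class u b \<and> i \<le> b \<and> defect u x i \<and>
      \<not> active (perturbed u x) b \<and> (\<forall>q. in_class u q \<and> q < i \<longrightarrow> active (perturbed u x) q))"

lemma in_class_add3: "in_class u (q + 3 * k) = in_class u q"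
  unfolding in_class_def by presburger

lemma in_class_diff: "in_class u p \<Longrightarrow> in_class u q \<Longrightarrow> 3 dvd (q - p)"
  unfolding in_class_def by presburger

lemma in_class_step: "in_class u q \<Longrightarrow> 3 dvd (q' - q) \<Longrightarrow> in_class u q'"
  unfolding in_class_def by presburger

lemma not_in_class: "\<not> in_class u q \<Longrightarrow> in_class u (q - 1) \<or> in_class u (q + 1)"
  unfolding in_class_def by presburger

lemma active_background_iff:
  assumes "full_class u"
  shows "active (background u) q \<longleftrightarrow> in_class u q"
proof -
  have rep: "active (background u) (class_rep u + 3 * k)" for k
    using someI_ex[OF assms[unfolded full_class_def]] by (simp add: class_rep_def)
  have "\<exists>k. q = class_rep u + 3 * k \<or> q = class_rep u + 3 * k + 1 \<or> q = class_rep u + 3 * k + 2"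
    by presburger
  then obtain k where "q = class_rep u + 3 * k \<or> q = class_rep u + 3 * k + 1 \<or> q = class_rep u + 3 * k + 2"
    by blast
  moreover have "\<not> 3 dvd (3 * k + 1)" "\<not> 3 dvd (3 * k + 2)" by presburger+
  ultimately show ?thesis
    using rep[of k] active_neighbours[OF rep[of k]] by (auto simp: in_class_def algebra_simps)
qed

lemma least_int_exists:
  fixes P :: "int \<Rightarrow> bool"
  assumes "P b" "\<And>x. P x \<Longrightarrow> L \<le> x"
  shows "\<exists>b0. P b0 \<and> (\<forall>x. P x \<longrightarrow> b0 \<le> x)"
proof -
  define m0 where "m0 = (LEAST m::nat. P (L + int m))"
  have "P (L + int (nat (b - L)))" using assms by simp
  then have least: "P (L + int m0)" unfolding m0_def by (rule LeastI)
  have "L + int m0 \<le> x" if "P x" for x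
  proof -
    have "L \<le> x" using assms(2) that .
    then have "P (L + int (nat (x - L)))" using that by simp
    then have "m0 \<le> nat (x - L)" unfolding m0_def by (rule Least_le)
    then show ?thesis using \<open>L \<le> x\<close> by linarith
  qed
  then show ?thesis using least by blast
qed

context
  fixes u x :: "bool list"
  assumes u_nonempty: "u \<noteq> []"
begin

text \<open>Information never travels to the right: right of the perturbation nothing changes.\<close>

lemma agree_right: "int (length x) + 2 \<le> j \<Longrightarrow> j \<notin> shift_diff u x t"
proof (induction t arbitrary: j)
  case 0
  then show ?case by (simp add: shift_diff_def perturbed_outside)
next
  case (Suc t)
  then show ?case by (simp add: shift_diff_def shift_iter_Suc active_perturbed_outside)
qed

lemma agree_left_of_break:
  "p + 3 * int k \<le> -6 \<Longrightarrow> \<not> active (background u) (p + 3 * int k) \<Longrightarrow>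
    shift_iter (perturbed u x) t p = shift_iter (background u) t p"
proof (induction k arbitrary: p t)
  case 0
  then have "\<not> active (perturbed u x) p" using active_perturbed_outside by simp
  then show ?case using 0 by (simp add: shift_iter_inactive perturbed_outside)
next
  case (Suc k)
  have same_active: "active (perturbed u x) p = active (background u) p"
    using active_perturbed_outside Suc.prems by simp
  show ?case
  proof (cases "active (background u) p")
    case False
    then show ?thesis using same_active Suc.prems by (simp add: shift_iter_inactive perturbed_outside)
  next
    case True
    show ?thesis
    proof (cases t)
      case (Suc s)
      have "shift_iter (perturbed u x) s (p + 3) = shift_iter (background u) s (p + 3)"
        using Suc.IH[of "p + 3" s] Suc.prems by (simp add: algebra_simps)
      then show ?thesis using Suc True same_active by (simp add: shift_iter_Suc)
    qed (use Suc.prems in \<open>simp add: perturbed_outside\<close>)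
  qed
qed

lemma break_within_period:
  assumes "\<not> full_class u"
  shows "\<exists>k < length u. \<not> active (background u) (p + 3 * int k)"
proof (rule ccontr)
  assume "\<not> ?thesis"
  then have chain: "\<forall>k < length u. active (background u) (p + 3 * int k)" by blast
  let ?N = "int (length u)"
  have "active (background u) (p + 3 * k)" for k :: int
  proof -
    have N: "0 \<le> k mod ?N" "k mod ?N < ?N" using u_nonempty by auto
    then have "nat (k mod ?N) < length u" by linarith
    then have "active (background u) (p + 3 * int (nat (k mod ?N)))"
      using chain by blast
    then have "active (background u) (p + 3 * (k mod ?N) + ?N * (3 * (k div ?N)))"
      using active_background_periodic[OF u_nonempty] N by simp
    moreover have "p + 3 * (k mod ?N) + ?N * (3 * (k div ?N)) = p + 3 * k"
      by (metis add.assoc distrib_left mult.left_commute mod_mult_div_eq)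
    ultimately show ?thesis by simp
  qed
  then show False using assms by (auto simp: full_class_def)
qed

lemma bounded_without_full_class:
  assumes "\<not> full_class u"
  shows "width_bounded (shift_diff u x)"
proof (rule width_bounded_const)
  fix t
  let ?N = "int (length u)"
  show "shift_diff u x t \<subseteq> {-5 - 3 * ?N..<int (length x) + 2}"
  proof
    fix j assume j: "j \<in> shift_diff u x t"
    have "-5 - 3 * ?N \<le> j"
    proof (rule ccontr)
      assume "\<not> ?thesis"
      moreover obtain k where "k < length u" "\<not> active (background u) (j + 3 * int k)"
        using break_within_period[OF assms] by blast
      ultimately have "shift_iter (perturbed u x) t j = shift_iter (background u) t j"
        by (intro agree_left_of_break) auto
      then show False using j by (simp add: shift_diff_def)
    qed
    moreover have "j < int (length x) + 2"
      using agree_right[of j t] j by linarith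
    ultimately show "j \<in> {-5 - 3 * ?N..<int (length x) + 2}" by simp
  qed
qed

lemma background_run:
  assumes "full_class u" "in_class u q"
  shows "shift_iter (background u) t q = background u (q + 3 * int t)"
  by (rule shift_iter_run) (use assms in \<open>simp add: active_background_iff in_class_add3\<close>)

lemma class_site_in_window:
  assumes "in_class u y"
  shows "\<exists>y'. in_class u y' \<and> a \<le> y' \<and> y' < a + 3 * int (length u) \<and> background u y' = background u y"
proof -
  let ?N = "int (length u)"
  define y' where "y' = y + ?N * (- (3 * ((y - a) div (3 * ?N))))"
  have "(y - a) div (3 * ?N) * (3 * ?N) + (y - a) mod (3 * ?N) = y - a" by (rule div_mult_mod_eq)
  then have "y' = a + (y - a) mod (3 * ?N)" unfolding y'_def by (simp add: algebra_simps)
  then have "a \<le> y'" "y' < a + 3 * ?N" using u_nonempty by auto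
  moreover have "in_class u y'"
    using assms in_class_add3[of u y "- (?N * ((y - a) div (3 * ?N)))"]
    by (simp add: y'_def algebra_simps)
  moreover have "background u y' = background u y"
    unfolding y'_def by (rule background_periodic[OF u_nonempty])
  ultimately show ?thesis by blast
qed

text \<open>Blocked class sites lie at positions at least -5: further left, activity in the perturbed
  configuration is that of the background.\<close>

lemma blocked_site_lower:
  assumes "full_class u" "in_class u b" "\<not> active (perturbed u x) b"
  shows "-5 \<le> b"
  using assms active_perturbed_outside[of b x u] active_background_iff[of u b] by force

text \<open>When no class site is blocked, sites off the class never differ, and a difference on the
  class stems from the window of x, from which it moves left by three cells per step.\<close>

lemma off_class_agrees:
  assumes full: "full_class u" and unblocked: "\<And>q. in_class u q \<Longrightarrow> active (perturbed u x) q"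
    and off: "\<not> in_class u q"
  shows "q \<notin> shift_diff u x t"
proof -
  have side: "in_class u (q - 1) \<or> in_class u (q + 1)" using not_in_class[OF off] .
  have "\<not> active (perturbed u x) q"
    using side unblocked active_neighbours(1) by (metis add_diff_cancel_right' diff_add_cancel)
  moreover have "\<not> active (background u) q" using active_background_iff[OF full] off by simp
  moreover have "perturbed u x q = background u q"
    using side
  proof
    assume "in_class u (q - 1)"
    then have "active (perturbed u x) (q - 1)" "active (background u) (q - 1)"
      using unblocked active_background_iff[OF full] by auto
    then show ?thesis using active_neighbours(3) by fastforce
  next
    assume "in_class u (q + 1)"
    then have "active (perturbed u x) (q + 1)" "active (background u) (q + 1)"
      using unblocked active_background_iff[OF full] by auto
    then show ?thesis using active_neighbours(4) by fastforce
  qed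
  ultimately show ?thesis by (simp add: shift_diff_def shift_iter_inactive)
qed

lemma bounded_without_blocked_site:
  assumes full: "full_class u" and unblocked: "\<And>q. in_class u q \<Longrightarrow> active (perturbed u x) q"
  shows "width_bounded (shift_diff u x)"
proof (rule width_bounded_I)
  fix t
  let ?a = "-3 - 3 * int t"
  show "shift_diff u x t \<subseteq> {?a..<?a + (int (length x) + 4)}"
  proof
    fix j assume j: "j \<in> shift_diff u x t"
    then have "in_class u j" using off_class_agrees[OF full unblocked] by blast
    then have "shift_iter (perturbed u x) t j = perturbed u x (j + 3 * int t)"
      by (intro shift_iter_run) (simp add: unblocked in_class_add3)
    moreover have "shift_iter (background u) t j = background u (j + 3 * int t)"
      by (rule background_run[OF full \<open>in_class u j\<close>])
    ultimately have "perturbed u x (j + 3 * int t) \<noteq> background u (j + 3 * int t)"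
      using j by (simp add: shift_diff_def)
    then have "-3 \<le> j + 3 * int t \<and> j + 3 * int t \<le> int (length x)"
      using perturbed_outside by fastforce
    then show "j \<in> {?a..<?a + (int (length x) + 4)}" by simp
  qed
qed

context
  fixes b0 :: int
  assumes full: "full_class u"
    and b0_class: "in_class u b0" and b0_blocked: "\<not> active (perturbed u x) b0"
    and below_b0: "\<And>q. in_class u q \<Longrightarrow> q < b0 \<Longrightarrow> active (perturbed u x) q"
begin

lemma perturbed_run:
  assumes "in_class u q" "q \<le> b0"
  shows "shift_iter (perturbed u x) t q = perturbed u x (min (q + 3 * int t) b0)"
  by (rule shift_iter_blocked)
     (use assms b0_class b0_blocked below_b0 in_class_diff in_class_step in blast)+

lemma class_diff_left_of_block:
  assumes "in_class u p" "p \<le> b0"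
  shows "p \<in> shift_diff u x t \<longleftrightarrow>
    perturbed u x (min (p + 3 * int t) b0) \<noteq> background u (p + 3 * int t)"
  using perturbed_run[OF assms] background_run[OF full assms(1)] by (auto simp: shift_diff_def)

lemma class_agrees_left_of_block:
  assumes no_defect: "\<not> blocked_defect u x" and q: "in_class u q" "q \<le> b0"
  shows "q \<notin> shift_diff u x t"
proof -
  define i where "i = min (q + 3 * int t) b0"
  have i: "in_class u i" "i \<le> b0"
    unfolding i_def using q b0_class in_class_add3[of u q "int t"] by (auto simp: min_def)
  have "\<not> defect u x i"
  proof
    assume "defect u x i"
    moreover have "\<forall>q'. in_class u q' \<and> q' < i \<longrightarrow> active (perturbed u x) q'"
      using below_b0 i by force
    ultimately show False
      using no_defect i b0_class b0_blocked unfolding blocked_defect_def by blast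
  qed
  moreover have "in_class u (q + 3 * int t)" using q in_class_add3 by simp
  ultimately have "perturbed u x i = background u (q + 3 * int t)"
    unfolding defect_def by blast
  then show ?thesis using class_diff_left_of_block[OF q] by (simp add: i_def)
qed

lemma bounded_left_of_block:
  assumes "\<not> blocked_defect u x"
  shows "width_bounded (shift_diff u x)"
proof (rule width_bounded_const)
  fix t
  have b0_lower: "-5 \<le> b0" by (rule blocked_site_lower[OF full b0_class b0_blocked])
  show "shift_diff u x t \<subseteq> {-5..<int (length x) + 2}"
  proof
    fix j assume j: "j \<in> shift_diff u x t"
    have "-5 \<le> j"
    proof (rule ccontr)
      assume left: "\<not> -5 \<le> j"
      show False
      proof (cases "in_class u j")
        case True
        then show False using class_agrees_left_of_block[OF assms] left b0_lower j by simp
      next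
        case False
        then have "\<not> active (background u) j" "\<not> active (perturbed u x) j"
          using active_background_iff[OF full] active_perturbed_outside left by auto
        then show False using j left by (simp add: shift_diff_def shift_iter_inactive perturbed_outside)
      qed
    qed
    moreover have "j < int (length x) + 2" using agree_right[of j t] j by linarith
    ultimately show "j \<in> {-5..<int (length x) + 2}" by simp
  qed
qed

text \<open>Some site next to b0 differs at every time: b0 is active in the background but not in the
  perturbed configuration, and activity is invariant.\<close>

lemma difference_near_block: "\<exists>d. b0 - 1 \<le> d \<and> d \<le> b0 + 2 \<and> d \<in> shift_diff u x t"
proof (rule ccontr)
  assume "\<not> ?thesis"
  then have "active (shift_iter (background u) t) b0 = active (shift_iter (perturbed u x) t) b0"
    by (intro active_local) (auto simp: shift_diff_def)
  then show False using b0_blocked b0_class active_background_iff[OF full] by simp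
qed

text \<open>After one period some difference lies 3t cells left of b0: either the defect itself is
  carried left, or the value of b0 is, against a differing background value.\<close>

lemma difference_far_left:
  assumes defect: "blocked_defect u x" and late: "length u \<le> t"
  shows "\<exists>p. p \<le> b0 + 3 * int (length u) - 3 * int t \<and> p \<in> shift_diff u x t"
proof -
  obtain i where i: "in_class u i" "defect u x i"
    and below_i: "\<forall>q. in_class u q \<and> q < i \<longrightarrow> active (perturbed u x) q"
    using defect unfolding blocked_defect_def by blast
  have "i \<le> b0" using below_i b0_class b0_blocked by force
  obtain j where j: "in_class u j" "perturbed u x i \<noteq> background u j"
    using i(2) unfolding defect_def by blast
  show ?thesis
  proof (cases "perturbed u x i = background u i")
    case False
    let ?p = "i - 3 * int t"
    have p: "in_class u ?p" "?p \<le> b0" using i(1) \<open>i \<le> b0\<close> in_class_add3[of u ?p "int t"] by auto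
    then have "?p \<in> shift_diff u x t"
      using class_diff_left_of_block False \<open>i \<le> b0\<close> by (simp add: min_def)
    then show ?thesis using \<open>i \<le> b0\<close> u_nonempty by (intro exI[of _ ?p]) auto
  next
    case True
    then obtain y where y: "in_class u y" "background u y \<noteq> perturbed u x b0"
      using i(1) j by metis
    obtain y' where y': "in_class u y'" "b0 \<le> y'" "y' < b0 + 3 * int (length u)"
      "background u y' = background u y"
      using class_site_in_window[OF y(1)] by blast
    let ?p = "y' - 3 * int t"
    have p: "in_class u ?p" "?p \<le> b0" using y' late in_class_add3[of u ?p "int t"] by auto
    then have "?p \<in> shift_diff u x t"
      using class_diff_left_of_block y y' by (simp add: min_def)
    then show ?thesis using y' by (intro exI[of _ ?p]) auto
  qed
qed

lemma unbounded_if_blocked_defect: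
  assumes "blocked_defect u x"
  shows "\<not> width_bounded (shift_diff u x)"
proof
  assume "width_bounded (shift_diff u x)"
  then obtain w where w: "\<And>t. \<exists>a. shift_diff u x t \<subseteq> {a..<a + w}"
    unfolding width_bounded_def by blast
  define t where "t = length u + nat w + 1"
  obtain a where a: "shift_diff u x t \<subseteq> {a..<a + w}" using w by blast
  obtain d where d: "b0 - 1 \<le> d" "d \<in> shift_diff u x t" using difference_near_block by blast
  have "length u \<le> t" by (simp add: t_def)
  then obtain p where p: "p \<le> b0 + 3 * int (length u) - 3 * int t" "p \<in> shift_diff u x t"
    using difference_far_left[OF assms] by blast
  have "a \<le> p" "d < a + w" using a d p by auto
  moreover have "int t = int (length u) + int (nat w) + 1" "w \<le> int (nat w)" by (simp_all add: t_def)
  ultimately show False using p(1) d(1) by linarith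
qed

end

lemma bounded_iff_no_blocked_defect:
  assumes full: "full_class u"
  shows "width_bounded (shift_diff u x) \<longleftrightarrow> \<not> blocked_defect u x"
proof (cases "\<exists>b. in_class u b \<and> \<not> active (perturbed u x) b")
  case True
  then obtain b where b: "in_class u b \<and> \<not> active (perturbed u x) b" by blast
  obtain b0 where b0: "in_class u b0 \<and> \<not> active (perturbed u x) b0"
    and least: "\<forall>q. in_class u q \<and> \<not> active (perturbed u x) q \<longrightarrow> b0 \<le> q"
    using least_int_exists[where P = "\<lambda>q. in_class u q \<and> \<not> active (perturbed u x) q", OF b]
      blocked_site_lower[OF full] by blast
  have "\<And>q. in_class u q \<Longrightarrow> q < b0 \<Longrightarrow> active (perturbed u x) q"
    using least by force
  then show ?thesis
    using bounded_left_of_block unbounded_if_blocked_defect full b0 by blast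
next
  case False
  then show ?thesis
    using bounded_without_blocked_site[OF full] unfolding blocked_defect_def by blast
qed

theorem SInv_criterion: "SInv 27 u x \<longleftrightarrow> \<not> full_class u \<or> \<not> blocked_defect u x"
  using SInv_iff_shift_diff bounded_without_full_class bounded_iff_no_blocked_defect by blast

end

section \<open>Splitting the criterion at a cut\<close>

definition blocked_defect_below :: "bool list \<Rightarrow> int \<Rightarrow> bool list \<Rightarrow> bool" where
  "blocked_defect_below u K x = (\<exists>i b. in_class u i \<and> in_class u b \<and> i \<le> b \<and> b \<le> K \<and>
      defect u x i \<and> \<not> active (perturbed u x) b \<and>
      (\<forall>q. in_class u q \<and> q < i \<longrightarrow> active (perturbed u x) q))"

definition defect_below :: "bool list \<Rightarrow> int \<Rightarrow> bool list \<Rightarrow> bool" where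
  "defect_below u K x = (\<exists>i. in_class u i \<and> i \<le> K \<and> defect u x i \<and>
      (\<forall>q. in_class u q \<and> q < i \<longrightarrow> active (perturbed u x) q))"

definition active_below :: "bool list \<Rightarrow> int \<Rightarrow> bool list \<Rightarrow> bool" where
  "active_below u K x = (\<forall>q. in_class u q \<and> q \<le> K \<longrightarrow> active (perturbed u x) q)"

definition blocked_above :: "bool list \<Rightarrow> int \<Rightarrow> bool list \<Rightarrow> bool" where
  "blocked_above u K x = (\<exists>b. in_class u b \<and> K < b \<and> \<not> active (perturbed u x) b)"

definition blocked_defect_above :: "bool list \<Rightarrow> int \<Rightarrow> bool list \<Rightarrow> bool" where
  "blocked_defect_above u K x = (\<exists>i b. in_class u i \<and> in_class u b \<and> K < i \<and> i \<le> b \<and>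
      defect u x i \<and> \<not> active (perturbed u x) b \<and>
      (\<forall>q. in_class u q \<and> K < q \<and> q < i \<longrightarrow> active (perturbed u x) q))"

lemma blocked_defect_split:
  "blocked_defect u x \<longleftrightarrow> blocked_defect_below u K x \<or> (defect_below u K x \<and> blocked_above u K x)
    \<or> (active_below u K x \<and> blocked_defect_above u K x)"
proof
  assume "blocked_defect u x"
  then obtain i b where w: "in_class u i" "in_class u b" "i \<le> b" "defect u x i"
      "\<not> active (perturbed u x) b" "\<forall>q. in_class u q \<and> q < i \<longrightarrow> active (perturbed u x) q"
    unfolding blocked_defect_def by blast
  consider "b \<le> K" | "i \<le> K" "K < b" | "K < i" by linarith
  then show "blocked_defect_below u K x \<or> (defect_below u K x \<and> blocked_above u K x)
    \<or> (active_below u K x \<and> blocked_defect_above u K x)"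
  proof cases
    case 1
    then show ?thesis unfolding blocked_defect_below_def using w by blast
  next
    case 2
    then show ?thesis unfolding defect_below_def blocked_above_def using w by blast
  next
    case 3
    have "active_below u K x" unfolding active_below_def using w 3 by force
    moreover have "blocked_defect_above u K x" unfolding blocked_defect_above_def using w 3 by blast
    ultimately show ?thesis by blast
  qed
next
  assume "blocked_defect_below u K x \<or> (defect_below u K x \<and> blocked_above u K x)
    \<or> (active_below u K x \<and> blocked_defect_above u K x)"
  then show "blocked_defect u x"
  proof (elim disjE conjE)
    assume "blocked_defect_below u K x"
    then show ?thesis unfolding blocked_defect_below_def blocked_defect_def by blast
  next
    assume "defect_below u K x" "blocked_above u K x"
    then obtain i b where w: "in_class u i" "i \<le> K" "defect u x i"
      "\<forall>q. in_class u q \<and> q < i \<longrightarrow> active (perturbed u x) q"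
      "in_class u b" "K < b" "\<not> active (perturbed u x) b"
      unfolding defect_below_def blocked_above_def by blast
    then have "i \<le> b" by linarith
    then show ?thesis unfolding blocked_defect_def using w by blast
  next
    assume below: "active_below u K x" and "blocked_defect_above u K x"
    then obtain i b where w: "in_class u i" "in_class u b" "K < i" "i \<le> b" "defect u x i"
      "\<not> active (perturbed u x) b" "\<forall>q. in_class u q \<and> K < q \<and> q < i \<longrightarrow> active (perturbed u x) q"
      unfolding blocked_defect_above_def by blast
    have "\<forall>q. in_class u q \<and> q < i \<longrightarrow> active (perturbed u x) q"
      using below w(7) unfolding active_below_def by (meson not_le)
    then show ?thesis unfolding blocked_defect_def using w by blast
  qed
qed

lemma active_perturbed_local:
  "(\<And>j. q - 2 \<le> j \<Longrightarrow> j \<le> q + 5 \<Longrightarrow> patch u x j = patch u x' j) \<Longrightarrow>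
    active (perturbed u x) q = active (perturbed u x') q"
  unfolding perturbed_def by (intro active_local double_step_local) auto

lemma defect_local:
  "(\<And>j. q - 1 \<le> j \<Longrightarrow> j \<le> q + 3 \<Longrightarrow> patch u x j = patch u x' j) \<Longrightarrow>
    defect u x q = defect u x' q"
  unfolding defect_def perturbed_def using double_step_local by metis

lemma below_transfer:
  assumes A: "\<And>q. q \<le> K \<Longrightarrow> active (perturbed u x) q = active (perturbed u x') q"
    and D: "\<And>q. q \<le> K \<Longrightarrow> defect u x q = defect u x' q"
  shows "blocked_defect_below u K x \<Longrightarrow> blocked_defect_below u K x'"
    and "defect_below u K x \<Longrightarrow> defect_below u K x'"
proof -
  assume "blocked_defect_below u K x"
  then obtain i b where w: "in_class u i" "in_class u b" "i \<le> b" "b \<le> K" "defect u x i"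
      "\<not> active (perturbed u x) b" "\<forall>q. in_class u q \<and> q < i \<longrightarrow> active (perturbed u x) q"
    unfolding blocked_defect_below_def by blast
  moreover have "\<forall>q. in_class u q \<and> q < i \<longrightarrow> active (perturbed u x') q" using w A by force
  ultimately show "blocked_defect_below u K x'"
    unfolding blocked_defect_below_def using A[of b] D[of i] by auto
next
  assume "defect_below u K x"
  then obtain i where w: "in_class u i" "i \<le> K" "defect u x i"
      "\<forall>q. in_class u q \<and> q < i \<longrightarrow> active (perturbed u x) q"
    unfolding defect_below_def by blast
  moreover have "\<forall>q. in_class u q \<and> q < i \<longrightarrow> active (perturbed u x') q" using w A by force
  ultimately show "defect_below u K x'"
    unfolding defect_below_def using D[of i] by auto
qed

lemma above_transfer:
  assumes A: "\<And>q. K < q \<Longrightarrow> active (perturbed u x) q = active (perturbed u x') q"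
    and D: "\<And>q. K < q \<Longrightarrow> defect u x q = defect u x' q"
    and "blocked_defect_above u K x"
  shows "blocked_defect_above u K x'"
proof -
  obtain i b where w: "in_class u i" "in_class u b" "K < i" "i \<le> b" "defect u x i"
      "\<not> active (perturbed u x) b" "\<forall>q. in_class u q \<and> K < q \<and> q < i \<longrightarrow> active (perturbed u x) q"
    using assms(3) unfolding blocked_defect_above_def by blast
  moreover have "\<forall>q. in_class u q \<and> K < q \<and> q < i \<longrightarrow> active (perturbed u x') q" using w A by force
  ultimately show ?thesis
    unfolding blocked_defect_above_def using A[of b] D[of i] by auto
qed

lemma below_cong:
  assumes "\<And>j. j \<le> K + 5 \<Longrightarrow> patch u x j = patch u x' j"
  shows "blocked_defect_below u K x = blocked_defect_below u K x'"
    "defect_below u K x = defect_below u K x'" "active_below u K x = active_below u K x'"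
proof -
  have A: "\<And>q. q \<le> K \<Longrightarrow> active (perturbed u x) q = active (perturbed u x') q"
    by (rule active_perturbed_local) (use assms in auto)
  have D: "\<And>q. q \<le> K \<Longrightarrow> defect u x q = defect u x' q"
    by (rule defect_local) (use assms in auto)
  show "blocked_defect_below u K x = blocked_defect_below u K x'"
    "defect_below u K x = defect_below u K x'"
    using below_transfer[of K u x x'] below_transfer[of K u x' x] A D by (metis, metis)
  show "active_below u K x = active_below u K x'"
    unfolding active_below_def using A by auto
qed

lemma above_cong:
  assumes "\<And>j. K - 1 \<le> j \<Longrightarrow> patch u x j = patch u x' j"
  shows "blocked_above u K x = blocked_above u K x'"
    "blocked_defect_above u K x = blocked_defect_above u K x'"
proof -
  have A: "\<And>q. K < q \<Longrightarrow> active (perturbed u x) q = active (perturbed u x') q"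
    by (rule active_perturbed_local) (use assms in auto)
  have D: "\<And>q. K < q \<Longrightarrow> defect u x q = defect u x' q"
    by (rule defect_local) (use assms in auto)
  show "blocked_above u K x = blocked_above u K x'"
    unfolding blocked_above_def using A by auto
  show "blocked_defect_above u K x = blocked_defect_above u K x'"
    using above_transfer[of K u x x'] above_transfer[of K u x' x] A D by metis
qed

text \<open>At a cut after position i, Bob rebuilds the part of the configuration right of i - 8
  from the last eight letters of Alice's word, padded on the left.\<close>

definition padded :: "nat \<Rightarrow> bool list \<Rightarrow> bool list \<Rightarrow> bool list" where
  "padded i tail y = replicate (i - length tail) False @ tail @ y"

lemma patch_prefix: "length x = i \<Longrightarrow> j < int i \<Longrightarrow> patch u (x @ y) j = patch u x j"
  by (auto simp: patch_def nth_append)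

lemma patch_suffix:
  assumes "length x = i" "int i - 8 \<le> j"
  shows "patch u (x @ y) j = patch u (padded i (drop (i - 8) x) y) j"
proof -
  let ?x' = "padded i (drop (i - 8) x) y"
  have x': "?x' = replicate (i - 8) False @ (drop (i - 8) x @ y)"
    unfolding padded_def using assms(1) by simp
  have xy: "x @ y = take (i - 8) x @ (drop (i - 8) x @ y)" by simp
  have len: "length (x @ y) = length ?x'" unfolding x' using assms(1) by simp
  have "(x @ y) ! nat j = ?x' ! nat j" if "0 \<le> j"
  proof -
    have "i - 8 \<le> nat j" using that assms(2) by linarith
    then show ?thesis unfolding x' by (subst xy) (simp add: nth_append assms(1))
  qed
  then show ?thesis using len by (simp add: patch_def)
qed

type_synonym summary = "bool \<times> bool \<times> bool \<times> bool list"

definition summary :: "bool list \<Rightarrow> nat \<Rightarrow> bool list \<Rightarrow> summary" where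
  "summary u i x = (let K = int i - 6 in
     (blocked_defect_below u K x, defect_below u K x, active_below u K x, drop (i - 8) x))"

definition verdict :: "bool list \<Rightarrow> nat \<Rightarrow> summary \<Rightarrow> bool list \<Rightarrow> bool" where
  "verdict u i s y = (case s of (bdb, db, ab, tail) \<Rightarrow>
     (let K = int i - 6; x' = padded i tail y in
      \<not> full_class u \<or> \<not> (bdb \<or> (db \<and> blocked_above u K x') \<or> (ab \<and> blocked_defect_above u K x'))))"

lemma SInv_verdict:
  assumes "u \<noteq> []" "length x = i"
  shows "SInv 27 u (x @ y) = verdict u i (summary u i x) y"
proof -
  let ?K = "int i - 6" and ?x' = "padded i (drop (i - 8) x) y"
  have "patch u (x @ y) j = patch u x j" if "j \<le> ?K + 5" for j
    using patch_prefix[OF assms(2)] that by simp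
  note below = below_cong[OF this]
  have "patch u (x @ y) j = patch u ?x' j" if "?K - 1 \<le> j" for j
    using patch_suffix[OF assms(2)] that by simp
  note above = above_cong[OF this]
  show ?thesis
    unfolding SInv_criterion[OF assms(1)] blocked_defect_split[of u "x @ y" ?K]
      verdict_def summary_def Let_def
    using below above by simp
qed

definition summaries :: "summary set" where
  "summaries = UNIV \<times> UNIV \<times> UNIV \<times> {l. length l \<le> 8}"

lemma finite_summaries: "finite summaries"
proof -
  have "finite {l :: bool list. length l \<le> 8}"
    using finite_lists_length_le[of "UNIV :: bool set" 8] by simp
  then show ?thesis unfolding summaries_def by (intro finite_cartesian_product) auto
qed

lemma summary_in_summaries: "length x = i \<Longrightarrow> summary u i x \<in> summaries"
  by (simp add: summary_def summaries_def Let_def)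

fun announce :: "('m \<Rightarrow> bool list \<Rightarrow> bool) \<Rightarrow> (bool list \<Rightarrow> 'm) \<Rightarrow> 'm list \<Rightarrow> protocol" where
  "announce h a [] = Leaf False"
| "announce h a (m # ms) = Alice (\<lambda>x. a x = m) (announce h a ms) (Bob (h m) (Leaf False) (Leaf True))"

lemma depth_announce: "depth (announce h a ms) \<le> length ms + 1"
  by (induction ms) auto

lemma run_announce: "a x \<in> set ms \<Longrightarrow> run (announce h a ms) x y = h (a x) y"
  by (induction ms) auto

lemma Dcut_le: "computes P g m i \<Longrightarrow> Dcut g m i \<le> depth P"
  unfolding Dcut_def by (rule Least_le) blast

lemma D_le: "(\<And>i. i < m \<Longrightarrow> Dcut g m i \<le> C) \<Longrightarrow> D g m \<le> C"
  by (cases "m = 0") (auto simp: D_def intro!: Max.boundedI)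

lemma Dcut_message_bound:
  assumes S: "finite S" and aS: "\<And>x. length x = i \<Longrightarrow> a x \<in> S"
    and gh: "\<And>x y. length x = i \<Longrightarrow> length y = m - i \<Longrightarrow> g (x @ y) = h (a x) y"
  shows "Dcut g m i \<le> card S + 1"
proof -
  obtain ms where ms: "set ms = S" "distinct ms" using finite_distinct_list[OF S] by blast
  have "computes (announce h a ms) g m i"
    unfolding computes_def
  proof (intro allI impI)
    fix x y :: "bool list" assume l: "length x = i" "length y = m - i"
    then have "a x \<in> set ms" using aS ms(1) by simp
    then show "run (announce h a ms) x y = g (x @ y)" using run_announce gh[OF l] by simp
  qed
  then have "Dcut g m i \<le> depth (announce h a ms)" by (rule Dcut_le)
  also have "\<dots> \<le> card S + 1" using depth_announce distinct_card[OF ms(2)] ms(1) by metis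
  finally show ?thesis .
qed

theorem mainTheorem12:
  fixes u :: "bool list"
  assumes "u \<noteq> []"
  shows "\<exists>C::nat. \<forall>n::nat. D (SInv 27 u) n \<le> C"
proof (intro exI allI D_le)
  fix n i :: nat
  show "Dcut (SInv 27 u) n i \<le> card summaries + 1"
    by (rule Dcut_message_bound[where a = "summary u i" and h = "verdict u i"])
       (simp_all add: finite_summaries summary_in_summaries SInv_verdict[OF assms])
qed

end
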